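(* Let $C\subseteq\mathbb{R}^a$ be a polyhedral convex cone and let $\mathcal{Y}_{out}$ be the set of nonzero vertices of the polytope $C\cap B_1$. Let $\mathcal{Y}_{in}\subseteq C$ be a finite nonempty set of vectors with $\|r\|=1$ for all $r\in\mathcal{Y}_{in}$, and let $\delta>0$. Suppose that for every $d\in\mathcal{Y}_{out}$ there exists $r\in\mathcal{Y}_{in}$ with $\|d-r\|\le\delta$. Then $$d_H\big(C\cap B_1,\ \operatorname{cone}\mathcal{Y}_{in}\cap B_1\big)\le\delta.$$
   Context: $\|\cdot\|$ denotes the $\ell_1$ norm and $B_1=\{y\in\mathbb{R}^a:\|y\|\le1\}$. $\operatorname{cone}\mathcal{Y}$ is the convex conic hull of $\mathcal{Y}$. The Hausdorff distance is $d_H(X,Y)=\max\{\sup_{x\in X}\inf_{y\in Y}\|x-y\|,\sup_{y\in Y}\inf_{x\in X}\|x-y\|\}$. *)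

theory Defs
  imports "HOL-Analysis.Analysis"
begin

definition l1norm :: "real^'n \<Rightarrow> real" where
  "l1norm x = (\<Sum>i\<in>UNIV. \<bar>x $ i\<bar>)"

definition l1ball :: "(real^'n) set" where
  "l1ball = {y. l1norm y \<le> 1}"

definition hausdist_l1 :: "(real^'n) set \<Rightarrow> (real^'n) set \<Rightarrow> real" where
  "hausdist_l1 X Y = max (SUP x\<in>X. INF y\<in>Y. l1norm (x - y)) (SUP y\<in>Y. INF x\<in>X. l1norm (x - y))"

definition polyhedral_cone :: "(real^'n) set \<Rightarrow> bool" where
  "polyhedral_cone C \<longleftrightarrow> polyhedron C \<and> convex_cone C"

end

theory Submission
  imports Defs
begin

text \<open>By Krein--Milman, every point of the polytope C \<inter> B1 is a convex combination of its
  extreme points. The points within l1-distance \<delta> of the convex set cone Yin \<inter> B1 form a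
  convex set, which contains every extreme point: the nonzero ones by hypothesis (each r \<in> Yin
  has norm 1, so lies in cone Yin \<inter> B1) and 0 trivially. Hence it contains all of C \<inter> B1.
  The other direction is free, since cone Yin \<inter> B1 \<subseteq> C \<inter> B1.\<close>

lemma l1norm_nonneg: "0 \<le> l1norm (x::real^'n)"
  unfolding l1norm_def by (simp add: sum_nonneg)

lemma l1norm_zero [simp]: "l1norm (0::real^'n) = 0"
  unfolding l1norm_def by simp

lemma l1norm_triangle: "l1norm (x + y) \<le> l1norm x + l1norm (y::real^'n)"
  unfolding l1norm_def by (simp add: sum.distrib[symmetric] sum_mono abs_triangle_ineq)

lemma l1norm_scaleR: "l1norm (c *\<^sub>R (x::real^'n)) = \<bar>c\<bar> * l1norm x"
  unfolding l1norm_def by (simp add: abs_mult sum_distrib_left)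

lemma l1norm_convex_combination:
  fixes x y :: "real^'n"
  assumes "0 \<le> u" "0 \<le> v"
  shows "l1norm (u *\<^sub>R x + v *\<^sub>R y) \<le> u * l1norm x + v * l1norm y"
  using l1norm_triangle[of "u *\<^sub>R x" "v *\<^sub>R y"] assms by (simp add: l1norm_scaleR)

lemma continuous_on_l1norm: "continuous_on UNIV (l1norm :: real^'n \<Rightarrow> real)"
  unfolding l1norm_def by (intro continuous_intros)

lemma closed_l1ball: "closed (l1ball :: (real^'n) set)"
  unfolding l1ball_def
  by (intro closed_Collect_le continuous_on_const continuous_on_subset[OF continuous_on_l1norm]) auto

lemma bounded_l1ball: "bounded (l1ball :: (real^'n) set)"
  unfolding l1ball_def bounded_iff
  by (rule exI[of _ 1]) (auto intro: order_trans[OF norm_le_l1_cart] simp: l1norm_def)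

lemma convex_l1_thickening:
  fixes K :: "(real^'n) set"
  assumes "convex K"
  shows "convex {x. \<exists>y\<in>K. l1norm (x - y) \<le> \<delta>}"
  unfolding convex_def
proof clarify
  fix x1 x2 y1 y2 :: "real^'n" and u v :: real
  assume y1: "y1 \<in> K" "l1norm (x1 - y1) \<le> \<delta>" and y2: "y2 \<in> K" "l1norm (x2 - y2) \<le> \<delta>"
    and uv: "0 \<le> u" "0 \<le> v" "u + v = 1"
  have "l1norm (u *\<^sub>R x1 + v *\<^sub>R x2 - (u *\<^sub>R y1 + v *\<^sub>R y2))
        = l1norm (u *\<^sub>R (x1 - y1) + v *\<^sub>R (x2 - y2))"
    by (simp add: algebra_simps)
  also have "\<dots> \<le> u * l1norm (x1 - y1) + v * l1norm (x2 - y2)"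
    using uv by (intro l1norm_convex_combination)
  also have "\<dots> \<le> u * \<delta> + v * \<delta>"
    using y1 y2 uv by (intro add_mono mult_left_mono) auto
  also have "\<dots> = \<delta>"
    using uv by (simp add: distrib_right[symmetric])
  finally have "l1norm (u *\<^sub>R x1 + v *\<^sub>R x2 - (u *\<^sub>R y1 + v *\<^sub>R y2)) \<le> \<delta>" .
  moreover have "u *\<^sub>R y1 + v *\<^sub>R y2 \<in> K"
    using assms y1 y2 uv by (simp add: convex_def)
  ultimately show "\<exists>y\<in>K. l1norm (u *\<^sub>R x1 + v *\<^sub>R x2 - y) \<le> \<delta>" ..
qed

lemma convex_l1ball: "convex (l1ball :: (real^'n) set)"
  using convex_l1_thickening[OF convex_singleton, of 0 1] by (simp add: l1ball_def)

lemma convex_hull_within_l1_distance: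
  fixes K :: "(real^'n) set"
  assumes "convex K" "\<forall>v\<in>E. \<exists>y\<in>K. l1norm (v - y) \<le> \<delta>" "x \<in> convex hull E"
  shows "\<exists>y\<in>K. l1norm (x - y) \<le> \<delta>"
  using hull_minimal[of E "{x. \<exists>y\<in>K. l1norm (x - y) \<le> \<delta>}" convex]
    convex_l1_thickening[OF assms(1)] assms(2,3)
  by blast

lemma compact_convex_within_l1_distance:
  fixes X K :: "(real^'n) set"
  assumes "compact X" "convex X" "convex K"
    and "\<And>v. v extreme_point_of X \<Longrightarrow> \<exists>y\<in>K. l1norm (v - y) \<le> \<delta>"
    and "x \<in> X"
  shows "\<exists>y\<in>K. l1norm (x - y) \<le> \<delta>"
proof -
  have "x \<in> convex hull {v. v extreme_point_of X}"
    using Krein_Milman_Minkowski[OF assms(1,2)] assms(5) by simp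
  with assms(3,4) show ?thesis
    by (intro convex_hull_within_l1_distance) auto
qed

lemma hausdist_l1_le:
  fixes X Y :: "(real^'n) set"
  assumes "X \<noteq> {}" "Y \<noteq> {}"
    and XY: "\<forall>x\<in>X. \<exists>y\<in>Y. l1norm (x - y) \<le> \<delta>"
    and YX: "\<forall>y\<in>Y. \<exists>x\<in>X. l1norm (x - y) \<le> \<delta>"
  shows "hausdist_l1 X Y \<le> \<delta>"
proof -
  have bdd: "bdd_below ((\<lambda>z. l1norm (f z)) ` A)" for f :: "'b \<Rightarrow> real^'n" and A
    by (rule bdd_belowI[of _ 0]) (auto simp: l1norm_nonneg)
  have "(INF y\<in>Y. l1norm (x - y)) \<le> \<delta>" if "x \<in> X" for x
  proof -
    obtain y where "y \<in> Y" "l1norm (x - y) \<le> \<delta>"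
      using XY \<open>x \<in> X\<close> by blast
    then show ?thesis
      using cINF_lower[OF bdd, of y Y "\<lambda>y. x - y"] by linarith
  qed
  then have "(SUP x\<in>X. INF y\<in>Y. l1norm (x - y)) \<le> \<delta>"
    using assms(1) by (intro cSUP_least) auto
  moreover have "(INF x\<in>X. l1norm (x - y)) \<le> \<delta>" if "y \<in> Y" for y
  proof -
    obtain x where "x \<in> X" "l1norm (x - y) \<le> \<delta>"
      using YX \<open>y \<in> Y\<close> by blast
    then show ?thesis
      using cINF_lower[OF bdd, of x X "\<lambda>x. x - y"] by linarith
  qed
  then have "(SUP y\<in>Y. INF x\<in>X. l1norm (x - y)) \<le> \<delta>"
    using assms(2) by (intro cSUP_least) auto
  ultimately show ?thesis
    unfolding hausdist_l1_def by simp
qed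

theorem mainTheorem9:
  fixes C :: "(real^'a) set" and Yin :: "(real^'a) set" and \<delta> :: real
  assumes "polyhedral_cone C"
    and "Yin \<subseteq> C" and "finite Yin" and "Yin \<noteq> {}"
    and "\<forall>r\<in>Yin. l1norm r = 1"
    and "\<delta> > 0"
    and "\<forall>d\<in>{v. v extreme_point_of (C \<inter> l1ball) \<and> v \<noteq> 0}. \<exists>r\<in>Yin. l1norm (d - r) \<le> \<delta>"
  shows "hausdist_l1 (C \<inter> l1ball) (convex_cone hull Yin \<inter> l1ball) \<le> \<delta>"
proof -
  let ?X = "C \<inter> l1ball" and ?Y = "convex_cone hull Yin \<inter> l1ball"
  have C: "polyhedron C" "convex_cone C"
    using assms(1) by (auto simp: polyhedral_cone_def)
  have "compact ?X" "convex ?X"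
    using C closed_l1ball bounded_l1ball convex_l1ball
    by (auto simp: compact_eq_bounded_closed polyhedron_imp_closed convex_cone_def
        intro: convex_Int)
  have "convex ?Y"
    by (intro convex_Int convex_convex_cone_hull convex_l1ball)
  have "0 \<in> ?Y" "Yin \<subseteq> ?Y"
    using assms(5) by (auto simp: convex_cone_hull_contains_0 hull_inc l1ball_def)
  have "?Y \<subseteq> ?X"
    using hull_minimal[of Yin C convex_cone] assms(2) C(2) by auto
  have extreme_close: "\<exists>y\<in>?Y. l1norm (v - y) \<le> \<delta>" if v: "v extreme_point_of ?X" for v
  proof (cases "v = 0")
    case True
    then show ?thesis using \<open>0 \<in> ?Y\<close> assms(6) by force
  next
    case False
    then obtain r where "r \<in> Yin" "l1norm (v - r) \<le> \<delta>"
      using v assms(7) by auto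
    then show ?thesis using \<open>Yin \<subseteq> ?Y\<close> by auto
  qed
  show ?thesis
  proof (rule hausdist_l1_le)
    show "\<forall>x\<in>?X. \<exists>y\<in>?Y. l1norm (x - y) \<le> \<delta>"
      using compact_convex_within_l1_distance[OF \<open>compact ?X\<close> \<open>convex ?X\<close> \<open>convex ?Y\<close>]
        extreme_close by blast
    show "\<forall>y\<in>?Y. \<exists>x\<in>?X. l1norm (x - y) \<le> \<delta>"
      using \<open>?Y \<subseteq> ?X\<close> assms(6) by (metis diff_self l1norm_zero less_le subsetD)
  qed (use \<open>0 \<in> ?Y\<close> \<open>?Y \<subseteq> ?X\<close> in auto)
qed

end
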